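(* Let $n$ training samples carry labels in $\{1,\dots,K\}$ with indicator matrix $F\in\mathbb{R}^{K\times n}$, $n_k$ samples in class $k$; let the basis $G_1,\dots,G_r$ ($r\le n$) be a subset of the training samples with $r_k\ge1$ basis vectors in class $k$, and let $F_{G_i}$ be the class indicator of $G_i$. Let $\tilde W\in\mathbb{R}^{r\times n}$ be entrywise nonnegative with every column summing to one, of full row rank, satisfying $\tilde W_{ij}=0$ whenever $F_{G_i}\neq F_j$, and let $\tilde W'=\tilde W+\Delta W$ for a matrix $\Delta W\in\mathbb{R}^{r\times n}$. Put $\xi=\|\tilde W^\dagger\|_2\|\Delta W\|_2$, $\delta=\|\Delta W\|_F/\|\tilde W\|_F$, $n_\rho=\sqrt{\max_kn_k/\min_kn_k}$, $r_\rho=\sqrt{\max_kr_k/\min_kr_k}$. Let $X=F\tilde W^\dagger$, $X'=F\tilde W'^\dagger$, let $\gamma=\|X\|_F^2\|\tilde W\|_F^2/\|X\tilde W\|_F^2$ be the spectral risk of the ideal case, and let $\epsilon'=\|F-X'\tilde W'\|_F^2/\|X'\tilde W'\|_F^2+1$ and $\gamma'=\|X'\|_F^2\|\tilde W'\|_F^2/\|X'\tilde W'\|_F^2$ be the fitting error and spectral risk of the perturbed case. If $\xi<1/n_\rho$, then $$\epsilon'\le\frac{n_\rho^2\xi^2}{(1-n_\rho\xi)^2}+1,\qquad \gamma'\le\gamma(1+\delta)^2\Big(\frac{1+r_\rho\xi}{1-n_\rho\xi}\Big)^2.$$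
   Context: The columns of $F$ are standard basis vectors of $\mathbb{R}^K$: $F_j=e_k$ iff sample $j$ is in class $k$. $\|\cdot\|_2$ of a matrix is the spectral norm; $M^\dagger$ is the Moore–Penrose pseudo-inverse (for $\tilde W$ of full row rank, $\tilde W^\dagger=\tilde W^T(\tilde W\tilde W^T)^{-1}$). $X$ and $X'$ are the least-squares solutions of $\min_X\|F-X\tilde W\|_F^2$ and $\min_X\|F-X\tilde W'\|_F^2$. *)

theory Defs
  imports "HOL-Analysis.Analysis"
begin

definition pinv :: "real^'n^'m \<Rightarrow> real^'m^'n" where
  "pinv A = (THE X. A ** X ** A = A \<and> X ** A ** X = X \<and>
                    transpose (A ** X) = A ** X \<and> transpose (X ** A) = X ** A)"

definition spec_norm :: "real^'n^'m \<Rightarrow> real" where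
  "spec_norm A = onorm (\<lambda>x. A *v x)"

definition frob :: "real^'n^'m \<Rightarrow> real" where
  "frob A = sqrt (\<Sum>i\<in>UNIV. \<Sum>j\<in>UNIV. (A $ i $ j)\<^sup>2)"

definition indicator_mat :: "('n \<Rightarrow> 'k) \<Rightarrow> real^'n^'k" where
  "indicator_mat lab = (\<chi> k j. if lab j = k then 1 else 0)"

end

theory Submission
  imports Defs
begin

text \<open>Since \<open>W\<close> only mixes basis vectors of a sample's own class and its columns sum to one,
  \<open>F = F\<^sub>G W\<close> lies in the row space of \<open>W\<close>, so \<open>X = F W\<^sup>\<dagger>\<close> fits exactly: \<open>X W = F\<close>.
  Let \<open>P' = W'\<^sup>\<dagger> W'\<close> be the orthogonal projector onto the row space of \<open>W' = W + \<Delta>W\<close>.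
  From \<open>W' P' = W'\<close> one gets \<open>X' W' - F = X \<Delta>W (I - P')\<close>, of norm at most \<open>\<parallel>F\<parallel> \<xi>\<close>, and
  Pythagoras for \<open>F = F P' + F (I - P')\<close> bounds the fitting error by \<open>\<xi>\<^sup>2 / (1 - \<xi>)\<^sup>2 + 1\<close>.
  For the risk, \<open>W' W\<^sup>\<dagger> = I + \<Delta>W W\<^sup>\<dagger>\<close> is invertible with \<open>\<parallel>(W' W\<^sup>\<dagger>) y\<parallel> \<ge> (1 - \<xi>) \<parallel>y\<parallel>\<close>, whence
  \<open>\<parallel>W'\<^sup>\<dagger>\<parallel>\<^sub>2 \<le> \<parallel>W\<^sup>\<dagger>\<parallel>\<^sub>2 / (1 - \<xi>)\<close>; writing \<open>X' = X - X \<Delta>W P' W'\<^sup>\<dagger>\<close> and splitting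
  \<open>\<parallel>X \<Delta>W\<parallel>\<^sup>2\<close> between \<open>P'\<close> and \<open>I - P'\<close> controls \<open>\<parallel>X'\<parallel>\<close> against \<open>\<parallel>X' W'\<parallel>\<close> and gives
  \<open>\<gamma>' \<le> \<gamma> (1 + \<delta>)\<^sup>2 ((1 + \<xi>) / (1 - \<xi>))\<^sup>2\<close>. As \<open>n\<^sub>\<rho>, r\<^sub>\<rho> \<ge> 1\<close>, these bounds in \<open>\<xi>\<close> alone imply
  the stated ones.\<close>

lemma matrix_diff_ldistrib: "(A::'a::ring_1^'n^'m) ** (B - C) = A ** B - A ** C"
  by (vector matrix_matrix_mult_def sum_subtractf right_diff_distrib)

lemma matrix_diff_rdistrib: "((A::'a::ring_1^'n^'m) - B) ** C = A ** C - B ** C"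
  by (vector matrix_matrix_mult_def sum_subtractf left_diff_distrib)

lemma matrix_add_rdistrib: "((A::'a::semiring_1^'n^'m) + B) ** C = A ** C + B ** C"
  by (vector matrix_matrix_mult_def sum.distrib distrib_right)

lemma frob_eq_norm: "frob (A::real^'n^'m) = norm A"
  unfolding frob_def norm_vec_def L2_set_def
  by (simp add: real_norm_def) (rule sum.cong, auto simp: sum_nonneg)

lemma power2_norm_vec_eq_sum_rows: "(norm (A::'a::real_inner^'m))\<^sup>2 = (\<Sum>i\<in>UNIV. (norm (A $ i))\<^sup>2)"
  by (simp add: power2_norm_eq_inner inner_vec_def)

lemma row_matrix_matrix_mult: "((A::'a::semiring_1^'n^'m) ** B) $ i = (A $ i) v* B"
  by (simp add: vec_eq_iff matrix_matrix_mult_def vector_matrix_mult_def)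

lemma inner_matrix_mult_left: "((A::real^'n^'m) ** B) \<bullet> C = A \<bullet> (C ** transpose B)"
proof -
  have "(A ** B) \<bullet> C = (\<Sum>i\<in>UNIV. (A ** B) $ i \<bullet> C $ i)"
    by (rule inner_vec_def)
  also have "\<dots> = (\<Sum>i\<in>UNIV. A $ i \<bullet> (C ** transpose B) $ i)"
    by (simp add: row_matrix_matrix_mult dot_lmul_matrix)
  finally show ?thesis by (simp add: inner_vec_def)
qed

lemma spec_norm_nonneg: "0 \<le> spec_norm (A::real^'n^'m)"
  unfolding spec_norm_def by (rule onorm_pos_le[OF matrix_vector_mul_bounded_linear])

lemma norm_matrix_vector_le: "norm (A *v x) \<le> spec_norm A * norm x"
  unfolding spec_norm_def by (rule onorm[OF matrix_vector_mul_bounded_linear])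

lemma spec_norm_le:
  assumes "\<And>x. norm (A *v x) \<le> c * norm x"
  shows "spec_norm (A::real^'n^'m) \<le> c"
  unfolding spec_norm_def using assms by (rule onorm_le)

lemma norm_vector_matrix_le: "norm (x v* (A::real^'n^'m)) \<le> spec_norm A * norm x"
proof -
  let ?y = "x v* A"
  have "(norm ?y)\<^sup>2 = x \<bullet> (A *v ?y)" by (simp add: power2_norm_eq_inner dot_lmul_matrix)
  also have "\<dots> \<le> norm x * norm (A *v ?y)" by (rule Cauchy_Schwarz_ineq2[THEN order_trans[OF abs_ge_self]])
  also have "\<dots> \<le> norm x * (spec_norm A * norm ?y)" by (simp add: mult_left_mono norm_matrix_vector_le)
  finally have "norm ?y * norm ?y \<le> (spec_norm A * norm x) * norm ?y"
    by (simp add: power2_eq_square algebra_simps)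
  then show ?thesis
    by (cases "norm ?y = 0") (auto simp: spec_norm_nonneg intro: mult_right_le_imp_le)
qed

lemma norm_matrix_mult_le: "norm ((A::real^'n^'m) ** B) \<le> norm A * spec_norm B"
proof -
  have "(norm (A ** B))\<^sup>2 = (\<Sum>i\<in>UNIV. (norm (A $ i v* B))\<^sup>2)"
    by (simp add: power2_norm_vec_eq_sum_rows row_matrix_matrix_mult)
  also have "\<dots> \<le> (\<Sum>i\<in>UNIV. (spec_norm B * norm (A $ i))\<^sup>2)"
    by (rule sum_mono) (simp add: power_mono norm_vector_matrix_le)
  also have "\<dots> = (norm A * spec_norm B)\<^sup>2"
    by (simp add: power2_norm_vec_eq_sum_rows power_mult_distrib sum_distrib_left algebra_simps)
  finally show ?thesis
    by (rule power2_le_imp_le) (auto simp: spec_norm_nonneg)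
qed

section \<open>Pseudo-inverse of a matrix of full row rank\<close>

lemma penrose_conditions_unique:
  fixes A :: "real^'n^'m" and X Y :: "real^'m^'n"
  assumes X1: "A ** X ** A = A" and X2: "X ** A ** X = X"
    and X3: "transpose (A ** X) = A ** X" and X4: "transpose (X ** A) = X ** A"
    and Y1: "A ** Y ** A = A" and Y2: "Y ** A ** Y = Y"
    and Y3: "transpose (A ** Y) = A ** Y" and Y4: "transpose (Y ** A) = Y ** A"
  shows "X = Y"
proof -
  have tA_right: "transpose A = transpose A ** (A ** Y)"
    by (metis Y1 Y3 matrix_transpose_mul)
  have tA_left: "transpose A = (X ** A) ** transpose A"
    by (metis X1 X4 matrix_transpose_mul matrix_mul_assoc)
  have "X = X ** transpose (A ** X)" using X2 X3 by (simp add: matrix_mul_assoc)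
  also have "\<dots> = X ** transpose X ** (transpose A ** (A ** Y))"
    using tA_right by (simp add: matrix_transpose_mul matrix_mul_assoc)
  also have "\<dots> = X ** transpose (A ** X) ** A ** Y" by (simp add: matrix_transpose_mul matrix_mul_assoc)
  also have "\<dots> = X ** A ** Y" using X2 X3 by (simp add: matrix_mul_assoc)
  also have "\<dots> = X ** A ** transpose A ** transpose Y ** Y"
    using tA_left by (metis matrix_mul_assoc matrix_transpose_mul Y2 Y4)
  also have "\<dots> = transpose (Y ** A) ** Y" using tA_left by (simp add: matrix_transpose_mul matrix_mul_assoc)
  also have "\<dots> = Y" using Y2 Y4 by simp
  finally show ?thesis .
qed

lemma gram_injective_if_surj:
  fixes A :: "real^'n^'m"
  assumes "surj ((*v) A)"
  shows "inj ((*v) (A ** transpose A))"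
proof -
  have "x = 0" if "(A ** transpose A) *v x = 0" for x
  proof -
    have "(transpose A *v x) \<bullet> (transpose A *v x) = x \<bullet> ((A ** transpose A) *v x)"
      by (metis dot_lmul_matrix matrix_vector_mul_assoc transpose_matrix_vector)
    then have z: "transpose A *v x = 0" using that by simp
    obtain u where u: "x = A *v u" using assms by (metis surjD)
    have "x \<bullet> x = u \<bullet> (transpose A *v x)"
      by (metis u dot_lmul_matrix inner_commute transpose_matrix_vector)
    then show "x = 0" using z by simp
  qed
  then show ?thesis
    by (metis (no_types, lifting) injI matrix_vector_mult_diff_distrib right_minus_eq)
qed

text \<open>For full row rank the Penrose conditions are met by \<open>A\<^sup>T (A A\<^sup>T)\<^sup>-\<^sup>1\<close>.\<close>

lemma pinv_full_row_rank:
  fixes A :: "real^'n^'m"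
  assumes "surj ((*v) A)"
  shows "A ** pinv A = mat 1 \<and> transpose (pinv A ** A) = pinv A ** A"
proof -
  obtain B where B: "B ** (A ** transpose A) = mat 1"
    using gram_injective_if_surj[OF assms] matrix_left_invertible_injective by blast
  then have B_right: "A ** transpose A ** B = mat 1" using matrix_left_right_inverse by blast
  have "transpose B ** (A ** transpose A) = mat 1"
    using B_right by (metis matrix_transpose_mul transpose_mat transpose_transpose)
  then have "transpose B = B"
    using B by (metis B_right matrix_mul_assoc matrix_mul_lid matrix_mul_rid)
  define Z where "Z = transpose A ** B"
  have AZ: "A ** Z = mat 1" unfolding Z_def using B_right by (simp add: matrix_mul_assoc)
  have ZA: "transpose (Z ** A) = Z ** A" unfolding Z_def
    using \<open>transpose B = B\<close> by (simp add: matrix_transpose_mul matrix_mul_assoc)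
  have penrose: "A ** Z ** A = A \<and> Z ** A ** Z = Z \<and> transpose (A ** Z) = A ** Z \<and> transpose (Z ** A) = Z ** A"
    using AZ ZA by (metis matrix_mul_assoc matrix_mul_lid matrix_mul_rid transpose_mat)
  have "pinv A = Z" unfolding pinv_def
    by (rule the_equality) (use penrose penrose_conditions_unique in blast)+
  then show ?thesis using AZ ZA by simp
qed

lemma right_inverse_pinv: "surj ((*v) A) \<Longrightarrow> A ** pinv A = mat 1"
  using pinv_full_row_rank by blast

lemma symmetric_pinv_mult: "surj ((*v) A) \<Longrightarrow> transpose (pinv A ** A) = pinv A ** A"
  using pinv_full_row_rank by blast

lemma pinv_mult_idem: "surj ((*v) A) \<Longrightarrow> pinv A ** A ** (pinv A ** A) = pinv A ** A"
  by (metis right_inverse_pinv matrix_mul_assoc matrix_mul_rid)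

lemma mult_pinv_mult: "surj ((*v) A) \<Longrightarrow> A ** (pinv A ** A) = A"
  by (metis right_inverse_pinv matrix_mul_assoc matrix_mul_lid)

lemma power2_norm_split_projector:
  fixes F :: "real^'n^'m" and P :: "real^'n^'n"
  assumes "transpose P = P" and "P ** P = P"
  shows "(norm F)\<^sup>2 = (norm (F ** P))\<^sup>2 + (norm (F ** (mat 1 - P)))\<^sup>2"
proof -
  have "(F ** P) \<bullet> (F ** (mat 1 - P)) = F \<bullet> (F ** ((mat 1 - P) ** P))"
    by (simp add: inner_matrix_mult_left assms(1) matrix_mul_assoc)
  also have "\<dots> = 0" by (simp add: matrix_diff_rdistrib assms(2))
  finally have "orthogonal (F ** P) (F ** (mat 1 - P))" by (simp add: orthogonal_def)
  moreover have "F = F ** P + F ** (mat 1 - P)" by (simp add: matrix_diff_ldistrib)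
  ultimately show ?thesis by (metis norm_add_Pythagorean)
qed

lemma norm_projector_le:
  fixes P :: "real^'n^'n"
  assumes "transpose P = P" and "P ** P = P"
  shows "norm (P *v u) \<le> norm u"
proof -
  have "(P *v u) \<bullet> ((mat 1 - P) *v u) = u \<bullet> ((P ** (mat 1 - P)) *v u)"
    by (metis assms(1) dot_lmul_matrix matrix_vector_mul_assoc transpose_matrix_vector)
  also have "\<dots> = 0" by (simp add: matrix_diff_ldistrib assms(2))
  finally have "orthogonal (P *v u) ((mat 1 - P) *v u)" by (simp add: orthogonal_def)
  moreover have "u = P *v u + (mat 1 - P) *v u" by (simp add: matrix_vector_mult_diff_rdistrib)
  ultimately have "(norm u)\<^sup>2 = (norm (P *v u))\<^sup>2 + (norm ((mat 1 - P) *v u))\<^sup>2"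
    by (metis norm_add_Pythagorean)
  then show ?thesis by (simp add: power2_le_imp_le)
qed

text \<open>\<open>A\<^sup>\<dagger> v\<close> is the orthogonal projection of any solution of \<open>A x = v\<close> onto the row space of \<open>A\<close>.\<close>

lemma norm_pinv_le_solution:
  assumes "surj ((*v) A)" and "A *v u = v"
  shows "norm (pinv A *v v) \<le> norm u"
proof -
  have "pinv A *v v = (pinv A ** A) *v u" using assms(2) by (simp flip: matrix_vector_mul_assoc)
  then show ?thesis
    using norm_projector_le[OF symmetric_pinv_mult pinv_mult_idem] assms(1) by metis
qed

section \<open>Perturbation of the pseudo-inverse\<close>

text \<open>\<open>(W + E) W\<^sup>\<dagger> = I + E W\<^sup>\<dagger>\<close> is within \<open>\<xi> < 1\<close> of the identity, hence invertible.\<close>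

lemma perturbed_preimage:
  fixes W E :: "real^'n^'r"
  defines "\<sigma> \<equiv> spec_norm (pinv W)" and "\<xi> \<equiv> spec_norm (pinv W) * spec_norm E"
  assumes sW: "surj ((*v) W)" and small: "\<xi> < 1"
  shows "\<exists>u. (W + E) *v u = v \<and> norm u \<le> \<sigma> / (1 - \<xi>) * norm v"
proof -
  define N where "N = (W + E) ** pinv W"
  have N_lower: "(1 - \<xi>) * norm y \<le> norm (N *v y)" for y
  proof -
    have "N *v y = y + E *v (pinv W *v y)"
      by (simp add: N_def matrix_add_rdistrib right_inverse_pinv[OF sW] matrix_vector_mult_add_rdistrib
          flip: matrix_vector_mul_assoc)
    moreover have "norm (E *v (pinv W *v y)) \<le> spec_norm E * norm (pinv W *v y)"
      by (rule norm_matrix_vector_le)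
    moreover have "\<dots> \<le> spec_norm E * (spec_norm (pinv W) * norm y)"
      by (simp add: mult_left_mono norm_matrix_vector_le spec_norm_nonneg)
    ultimately show ?thesis
      using norm_triangle_ineq4[of "N *v y" "E *v (pinv W *v y)"] by (simp add: \<xi>_def algebra_simps)
  qed
  have "inj ((*v) N)"
  proof (rule injI)
    fix x y assume "N *v x = N *v y"
    then have "(1 - \<xi>) * norm (x - y) \<le> 0"
      using N_lower[of "x - y"] by (simp add: matrix_vector_mult_diff_distrib)
    then show "x = y" using small by (simp add: mult_le_0_iff)
  qed
  then have "surj ((*v) N)" using full_rank_injective full_rank_surjective by metis
  then obtain y where y: "N *v y = v" by (metis surjD)
  have "norm (pinv W *v y) \<le> \<sigma> * norm y" by (simp add: \<sigma>_def norm_matrix_vector_le)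
  also have "\<dots> \<le> \<sigma> * (norm v / (1 - \<xi>))"
  proof (rule mult_left_mono)
    show "norm y \<le> norm v / (1 - \<xi>)" using N_lower[of y] y small by (simp add: field_simps)
  qed (simp add: \<sigma>_def spec_norm_nonneg)
  finally have "norm (pinv W *v y) \<le> \<sigma> / (1 - \<xi>) * norm v" by simp
  moreover have "(W + E) *v (pinv W *v y) = v" using y by (simp add: N_def matrix_vector_mul_assoc)
  ultimately show ?thesis by blast
qed

lemma surj_perturbed:
  assumes "surj ((*v) W)" and "spec_norm (pinv W) * spec_norm E < 1"
  shows "surj ((*v) (W + E))"
  by (metis assms perturbed_preimage surjI)

lemma spec_norm_pinv_perturbed_le:
  fixes W E :: "real^'n^'r"
  defines "\<xi> \<equiv> spec_norm (pinv W) * spec_norm E"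
  assumes sW: "surj ((*v) W)" and small: "\<xi> < 1"
  shows "spec_norm (pinv (W + E)) \<le> spec_norm (pinv W) / (1 - \<xi>)"
proof (rule spec_norm_le)
  fix v
  obtain u where u: "(W + E) *v u = v" "norm u \<le> spec_norm (pinv W) / (1 - \<xi>) * norm v"
    using perturbed_preimage[OF sW] small unfolding \<xi>_def by blast
  have "surj ((*v) (W + E))" using surj_perturbed[OF sW] small by (simp add: \<xi>_def)
  then have "norm (pinv (W + E) *v v) \<le> norm u" using u(1) by (rule norm_pinv_le_solution)
  then show "norm (pinv (W + E) *v v) \<le> spec_norm (pinv W) / (1 - \<xi>) * norm v"
    using u(2) by (rule order_trans)
qed

section \<open>Perturbed least squares\<close>

lemma perturbed_fit_scalar:
  fixes b f x :: real
  assumes "0 \<le> b" "b \<le> f * x" "0 \<le> x" "x < 1"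
  shows "b\<^sup>2 / (f\<^sup>2 - b\<^sup>2) \<le> x\<^sup>2 / (1 - x)\<^sup>2"
proof (cases "b = 0")
  case False
  then have b_pos: "0 < b" using assms(1) by simp
  have "x\<^sup>2 \<le> x" using assms(3,4) by (simp add: power2_eq_square mult_left_le_one_le)
  then have "(1 - x)\<^sup>2 + x\<^sup>2 \<le> 1" by (simp add: power2_eq_square algebra_simps)
  then have "b\<^sup>2 * ((1 - x)\<^sup>2 + x\<^sup>2) \<le> b\<^sup>2" by (simp add: mult_left_le)
  moreover have "b\<^sup>2 \<le> (f * x)\<^sup>2" by (rule power_mono[OF assms(2,1)])
  ultimately have cross: "b\<^sup>2 * (1 - x)\<^sup>2 \<le> x\<^sup>2 * (f\<^sup>2 - b\<^sup>2)"
    by (simp add: power_mult_distrib algebra_simps)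
  have "0 < f * x" using b_pos assms(2) by linarith
  then have "0 < f" using assms(3) by (simp add: zero_less_mult_iff)
  then have "f * x < f" using assms(4) by simp
  then have "b < f" using assms(2) by linarith
  then have "0 < f\<^sup>2 - b\<^sup>2" using b_pos by (simp add: power_strict_mono)
  moreover have "b\<^sup>2 \<le> x\<^sup>2 * (f\<^sup>2 - b\<^sup>2) / (1 - x)\<^sup>2"
    using cross assms(4) by (simp add: pos_le_divide_eq)
  ultimately show ?thesis by (simp add: mult_imp_div_pos_le)
qed simp

lemma perturbed_risk_polynomial:
  fixes t u p q \<xi> :: real
  assumes "0 \<le> \<xi>" "\<xi> < 1" "0 \<le> t" "t \<le> u" "0 \<le> p" "p\<^sup>2 + q\<^sup>2 \<le> (t * \<xi>)\<^sup>2"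
  shows "(t * (1 - \<xi>) + p)\<^sup>2 * u\<^sup>2 \<le> (t * (1 + \<xi>))\<^sup>2 * (u\<^sup>2 - q\<^sup>2)"
proof -
  have "p\<^sup>2 \<le> (t * \<xi>)\<^sup>2" using assms(6) zero_le_power2[of q] by linarith
  then have p_le: "p \<le> t * \<xi>" by (rule power2_le_imp_le) (use assms(1,3) in simp)
  define A where "A = t * (1 - \<xi>) + p"
  define B where "B = t * (1 + \<xi>)"
  define D where "D = B\<^sup>2 - A\<^sup>2"
  have "0 \<le> t * \<xi>" using assms(1,3) by simp
  then have "A \<le> B"
    unfolding A_def B_def right_diff_distrib distrib_left using p_le by linarith
  moreover have "0 \<le> A" using assms(2,3,5) by (simp add: A_def)
  ultimately have D_nonneg: "0 \<le> D" unfolding D_def by (simp add: power_mono)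
  have "2 * t * p \<le> 2 * (t\<^sup>2 * \<xi>)"
    using p_le assms(3) by (simp add: power2_eq_square mult_left_mono mult.assoc)
  also have "\<dots> \<le> \<xi> * (4 + 3 * \<xi> + \<xi>\<^sup>2) * t\<^sup>2"
    using assms(1) by (simp add: mult_right_mono algebra_simps)
  finally have "0 \<le> (1 - \<xi>) * (\<xi> * (4 + 3 * \<xi> + \<xi>\<^sup>2) * t\<^sup>2 - 2 * t * p)"
    using assms(2) by simp
  moreover have "0 \<le> \<xi> * (2 + \<xi>) * p\<^sup>2" using assms(1) by simp
  moreover have "D - (1 + \<xi>)\<^sup>2 * ((t * \<xi>)\<^sup>2 - p\<^sup>2)
      = \<xi> * (2 + \<xi>) * p\<^sup>2 + (1 - \<xi>) * (\<xi> * (4 + 3 * \<xi> + \<xi>\<^sup>2) * t\<^sup>2 - 2 * t * p)"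
    by (simp add: D_def A_def B_def power2_eq_square algebra_simps)
  ultimately have "(1 + \<xi>)\<^sup>2 * ((t * \<xi>)\<^sup>2 - p\<^sup>2) \<le> D" by linarith
  moreover have "(1 + \<xi>)\<^sup>2 * q\<^sup>2 \<le> (1 + \<xi>)\<^sup>2 * ((t * \<xi>)\<^sup>2 - p\<^sup>2)"
    using assms(6) by (simp add: mult_left_mono)
  ultimately have "t\<^sup>2 * ((1 + \<xi>)\<^sup>2 * q\<^sup>2) \<le> t\<^sup>2 * D"
    by (simp add: mult_left_mono)
  also have "\<dots> \<le> u\<^sup>2 * D"
    using D_nonneg assms(3,4) by (simp add: mult_right_mono power_mono)
  finally have "B\<^sup>2 * q\<^sup>2 \<le> u\<^sup>2 * D" by (simp add: B_def power_mult_distrib)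
  then have "A\<^sup>2 * u\<^sup>2 \<le> B\<^sup>2 * (u\<^sup>2 - q\<^sup>2)" by (simp add: D_def algebra_simps)
  then show ?thesis by (simp add: A_def B_def)
qed

text \<open>Here \<open>x, t, f\<close> stand for \<open>\<parallel>X'\<parallel>, \<parallel>X\<parallel>, \<parallel>F\<parallel>\<close>, \<open>\<sigma>\<close> for \<open>\<parallel>W\<^sup>\<dagger>\<parallel>\<^sub>2\<close>, and \<open>\<alpha>, \<beta>\<close> for the parts of
  \<open>\<parallel>X \<Delta>W\<parallel>\<close> inside and orthogonal to the row space of \<open>W'\<close>.\<close>

lemma perturbed_risk_scalar:
  fixes t f \<sigma> \<xi> \<alpha> \<beta> x :: real
  assumes "0 \<le> \<xi>" "\<xi> < 1" "0 \<le> t" "t \<le> f * \<sigma>" "0 \<le> \<sigma>" "0 \<le> \<alpha>"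
    and "(\<alpha> * \<sigma>)\<^sup>2 + (\<beta> * \<sigma>)\<^sup>2 \<le> (t * \<xi>)\<^sup>2" and "0 \<le> x" "x \<le> t + \<alpha> * \<sigma> / (1 - \<xi>)"
  shows "x\<^sup>2 * f\<^sup>2 \<le> (t * (1 + \<xi>) / (1 - \<xi>))\<^sup>2 * (f\<^sup>2 - \<beta>\<^sup>2)"
proof (cases "\<sigma> = 0")
  case True
  then show ?thesis using assms by simp
next
  case False
  have "(t * (1 - \<xi>) + \<alpha> * \<sigma>)\<^sup>2 * (f * \<sigma>)\<^sup>2 \<le> (t * (1 + \<xi>))\<^sup>2 * ((f * \<sigma>)\<^sup>2 - (\<beta> * \<sigma>)\<^sup>2)"
    using assms by (intro perturbed_risk_polynomial) simp_all
  then have "\<sigma>\<^sup>2 * ((t * (1 - \<xi>) + \<alpha> * \<sigma>)\<^sup>2 * f\<^sup>2) \<le> \<sigma>\<^sup>2 * ((t * (1 + \<xi>))\<^sup>2 * (f\<^sup>2 - \<beta>\<^sup>2))"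
    by (simp add: algebra_simps)
  then have bound: "(t * (1 - \<xi>) + \<alpha> * \<sigma>)\<^sup>2 * f\<^sup>2 \<le> (t * (1 + \<xi>))\<^sup>2 * (f\<^sup>2 - \<beta>\<^sup>2)"
    using False by (simp add: mult_le_cancel_left_pos)
  have "(x * (1 - \<xi>))\<^sup>2 \<le> (t * (1 - \<xi>) + \<alpha> * \<sigma>)\<^sup>2"
  proof (rule power_mono)
    show "x * (1 - \<xi>) \<le> t * (1 - \<xi>) + \<alpha> * \<sigma>" using assms(2,9) by (simp add: field_simps)
  qed (use assms(2,8) in simp)
  then have "(x * (1 - \<xi>))\<^sup>2 * f\<^sup>2 \<le> (t * (1 + \<xi>))\<^sup>2 * (f\<^sup>2 - \<beta>\<^sup>2)"
    using bound by (meson mult_right_mono order_trans zero_le_power2)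
  then have "(x * (1 - \<xi>))\<^sup>2 * f\<^sup>2 / (1 - \<xi>)\<^sup>2 \<le> (t * (1 + \<xi>))\<^sup>2 * (f\<^sup>2 - \<beta>\<^sup>2) / (1 - \<xi>)\<^sup>2"
    by (rule divide_right_mono) simp
  moreover have "(x * (1 - \<xi>))\<^sup>2 * f\<^sup>2 / (1 - \<xi>)\<^sup>2 = x\<^sup>2 * f\<^sup>2"
    using assms(2) by (simp add: power_mult_distrib)
  moreover have "(t * (1 + \<xi>))\<^sup>2 * (f\<^sup>2 - \<beta>\<^sup>2) / (1 - \<xi>)\<^sup>2 = (t * (1 + \<xi>) / (1 - \<xi>))\<^sup>2 * (f\<^sup>2 - \<beta>\<^sup>2)"
    by (simp add: power_divide)
  ultimately show ?thesis by simp
qed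

lemma perturbed_residual_eq:
  fixes W E :: "real^'n^'r" and F :: "real^'n^'k"
  defines "P \<equiv> pinv (W + E) ** (W + E)"
  assumes sW': "surj ((*v) (W + E))" and exact: "F ** pinv W ** W = F"
  shows "F ** P - F = F ** pinv W ** E ** (mat 1 - P)"
proof -
  have "W ** P + E ** P = W + E"
    using mult_pinv_mult[OF sW'] by (simp add: P_def matrix_add_rdistrib)
  then have WP: "W ** P - W = E ** (mat 1 - P)" by (simp add: matrix_diff_ldistrib algebra_simps)
  have "F ** P - F = F ** pinv W ** (W ** P - W)"
    using exact by (metis matrix_diff_ldistrib matrix_mul_assoc)
  then show ?thesis using WP by (simp add: matrix_mul_assoc)
qed

lemma perturbed_solution_eq:
  fixes W E :: "real^'n^'r" and F :: "real^'n^'k"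
  defines "P \<equiv> pinv (W + E) ** (W + E)"
  assumes sW': "surj ((*v) (W + E))" and exact: "F ** pinv W ** W = F"
  shows "F ** pinv (W + E) = F ** pinv W - F ** pinv W ** E ** P ** pinv (W + E)"
proof -
  let ?X = "F ** pinv W" and ?W' = "W + E"
  have P_pinv: "P ** pinv ?W' = pinv ?W'"
    by (metis P_def right_inverse_pinv[OF sW'] matrix_mul_assoc matrix_mul_rid)
  have "?X ** (?W' ** pinv ?W') = ?X ** W ** pinv ?W' + ?X ** E ** pinv ?W'"
    by (simp add: matrix_add_rdistrib matrix_add_ldistrib matrix_mul_assoc)
  then have "F ** pinv ?W' = ?X - ?X ** E ** pinv ?W'"
    using exact right_inverse_pinv[OF sW'] by (simp add: algebra_simps)
  then show ?thesis by (simp add: P_pinv flip: matrix_mul_assoc)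
qed

text \<open>The \<open>+ 1\<close> follows the paper: for a least-squares solution \<open>X\<close> the value is
  \<open>\<parallel>F\<parallel>\<^sup>2 / \<parallel>X W\<parallel>\<^sup>2\<close>.\<close>

definition fitting_error :: "real^'n^'k \<Rightarrow> real^'r^'k \<Rightarrow> real^'n^'r \<Rightarrow> real" where
  "fitting_error F X W = (norm (F - X ** W))\<^sup>2 / (norm (X ** W))\<^sup>2 + 1"

definition spectral_risk :: "real^'r^'k \<Rightarrow> real^'n^'r \<Rightarrow> real" where
  "spectral_risk X W = (norm X)\<^sup>2 * (norm W)\<^sup>2 / (norm (X ** W))\<^sup>2"

lemma perturbed_fit_error_le:
  fixes W E :: "real^'n^'r" and F :: "real^'n^'k"
  defines "\<xi> \<equiv> spec_norm (pinv W) * spec_norm E"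
  assumes sW: "surj ((*v) W)" and exact: "F ** pinv W ** W = F" and small: "\<xi> < 1"
  shows "fitting_error F (F ** pinv (W + E)) (W + E) \<le> \<xi>\<^sup>2 / (1 - \<xi>)\<^sup>2 + 1"
proof -
  define P where "P = pinv (W + E) ** (W + E)"
  define X where "X = F ** pinv W"
  have sW': "surj ((*v) (W + E))" using surj_perturbed sW small by (simp add: \<xi>_def)
  have P: "transpose P = P" "P ** P = P"
    by (simp_all add: P_def symmetric_pinv_mult pinv_mult_idem sW')
  have residual: "F - F ** pinv (W + E) ** (W + E) = F ** (mat 1 - P)"
    by (simp add: P_def matrix_diff_ldistrib matrix_mul_assoc)
  have "(norm (X ** E ** (mat 1 - P)))\<^sup>2 \<le> (norm (X ** E))\<^sup>2"
    using power2_norm_split_projector[OF P, of "X ** E"] by simp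
  then have "norm (F ** (mat 1 - P)) \<le> norm (X ** E)"
    using perturbed_residual_eq[OF sW' exact] norm_minus_commute
    by (metis P_def X_def matrix_diff_ldistrib matrix_mul_rid norm_ge_zero power2_le_imp_le)
  also have "\<dots> \<le> norm X * spec_norm E" by (rule norm_matrix_mult_le)
  also have "\<dots> \<le> norm F * spec_norm (pinv W) * spec_norm E"
    using norm_matrix_mult_le[of F "pinv W"] spec_norm_nonneg[of E] by (simp add: X_def mult_right_mono)
  also have "\<dots> = norm F * \<xi>" by (simp add: \<xi>_def)
  finally have "(norm (F ** (mat 1 - P)))\<^sup>2 / ((norm F)\<^sup>2 - (norm (F ** (mat 1 - P)))\<^sup>2) \<le> \<xi>\<^sup>2 / (1 - \<xi>)\<^sup>2"
    using small by (intro perturbed_fit_scalar) (simp_all add: \<xi>_def spec_norm_nonneg)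
  then show ?thesis
    using power2_norm_split_projector[OF P, of F]
    by (simp add: fitting_error_def residual P_def matrix_mul_assoc)
qed

lemma norm_perturbed_solution_le:
  fixes W E :: "real^'n^'r" and F :: "real^'n^'k"
  defines "\<xi> \<equiv> spec_norm (pinv W) * spec_norm E"
  assumes sW: "surj ((*v) W)" and exact: "F ** pinv W ** W = F" and small: "\<xi> < 1"
  shows "(norm (F ** pinv (W + E)))\<^sup>2 * (norm F)\<^sup>2
    \<le> (norm (F ** pinv W))\<^sup>2 * ((1 + \<xi>) / (1 - \<xi>))\<^sup>2 * (norm (F ** pinv (W + E) ** (W + E)))\<^sup>2"
proof -
  define P where "P = pinv (W + E) ** (W + E)"
  define X where "X = F ** pinv W"
  define \<sigma> where "\<sigma> = spec_norm (pinv W)"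
  define \<alpha> where "\<alpha> = norm (X ** E ** P)"
  define \<beta> where "\<beta> = norm (X ** E ** (mat 1 - P))"
  have sW': "surj ((*v) (W + E))" using surj_perturbed sW small by (simp add: \<xi>_def)
  have P: "transpose P = P" "P ** P = P"
    by (simp_all add: P_def symmetric_pinv_mult pinv_mult_idem sW')
  have "norm (F ** (mat 1 - P)) = \<beta>"
    using perturbed_residual_eq[OF sW' exact] norm_minus_commute
    by (metis P_def X_def \<beta>_def matrix_diff_ldistrib matrix_mul_rid)
  then have fit: "(norm F)\<^sup>2 = (norm (F ** pinv (W + E) ** (W + E)))\<^sup>2 + \<beta>\<^sup>2"
    using power2_norm_split_projector[OF P, of F] by (simp add: P_def matrix_mul_assoc)
  have "(\<alpha> * \<sigma>)\<^sup>2 + (\<beta> * \<sigma>)\<^sup>2 = (norm (X ** E) * \<sigma>)\<^sup>2"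
    using power2_norm_split_projector[OF P, of "X ** E"] by (simp add: \<alpha>_def \<beta>_def power_mult_distrib algebra_simps)
  also have "\<dots> \<le> (norm X * spec_norm E * \<sigma>)\<^sup>2"
    by (intro power_mono mult_right_mono norm_matrix_mult_le) (simp_all add: \<sigma>_def spec_norm_nonneg)
  also have "\<dots> = (norm X * \<xi>)\<^sup>2" by (simp add: \<xi>_def \<sigma>_def algebra_simps)
  finally have split: "(\<alpha> * \<sigma>)\<^sup>2 + (\<beta> * \<sigma>)\<^sup>2 \<le> (norm X * \<xi>)\<^sup>2" .
  have "norm (F ** pinv (W + E)) \<le> norm X + norm (X ** E ** P ** pinv (W + E))"
    using perturbed_solution_eq[OF sW' exact] by (simp add: X_def P_def norm_triangle_ineq4)
  also have "\<dots> \<le> norm X + \<alpha> * spec_norm (pinv (W + E))"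
    using norm_matrix_mult_le[of "X ** E ** P"] by (simp add: \<alpha>_def)
  also have "\<dots> \<le> norm X + \<alpha> * (\<sigma> / (1 - \<xi>))"
    using spec_norm_pinv_perturbed_le[OF sW, of E] small
    unfolding \<sigma>_def \<xi>_def by (intro add_left_mono mult_left_mono) (simp_all add: \<alpha>_def)
  finally have "norm (F ** pinv (W + E)) \<le> norm X + \<alpha> * \<sigma> / (1 - \<xi>)" by simp
  then have "(norm (F ** pinv (W + E)))\<^sup>2 * (norm F)\<^sup>2 \<le> (norm X * (1 + \<xi>) / (1 - \<xi>))\<^sup>2 * ((norm F)\<^sup>2 - \<beta>\<^sup>2)"
    using small split norm_matrix_mult_le[of F "pinv W"]
    by (intro perturbed_risk_scalar) (simp_all add: X_def \<xi>_def \<sigma>_def \<alpha>_def spec_norm_nonneg)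
  then show ?thesis using fit by (simp add: X_def power_mult_distrib power_divide)
qed

lemma nonzero_if_surj:
  assumes "surj ((*v) (A::real^'n^'m))"
  shows "A \<noteq> 0"
proof
  assume "A = 0"
  obtain x where "A *v x = 1" using assms by (metis surjD)
  with \<open>A = 0\<close> show False by simp
qed

lemma perturbed_spectral_risk_le:
  fixes W E :: "real^'n^'r" and F :: "real^'n^'k"
  defines "\<xi> \<equiv> spec_norm (pinv W) * spec_norm E"
  assumes sW: "surj ((*v) W)" and exact: "F ** pinv W ** W = F" and small: "\<xi> < 1"
  shows "spectral_risk (F ** pinv (W + E)) (W + E)
    \<le> spectral_risk (F ** pinv W) W * (1 + norm E / norm W)\<^sup>2 * ((1 + \<xi>) / (1 - \<xi>))\<^sup>2"
proof -
  let ?x = "norm (F ** pinv (W + E))" and ?m = "norm (F ** pinv (W + E) ** (W + E))"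
    and ?t = "norm (F ** pinv W)" and ?f = "norm F" and ?R = "(1 + \<xi>) / (1 - \<xi>)"
    and ?w' = "norm (W + E)" and ?w = "norm W" and ?\<delta> = "norm E / norm W"
  have "?x\<^sup>2 * ?w'\<^sup>2 / ?m\<^sup>2 \<le> ?t\<^sup>2 * ?w\<^sup>2 / ?f\<^sup>2 * (1 + ?\<delta>)\<^sup>2 * ?R\<^sup>2"
  proof (cases "?m = 0")
    case False
    then have "F \<noteq> 0" by auto
    have "?x\<^sup>2 * ?f\<^sup>2 \<le> ?t\<^sup>2 * ?R\<^sup>2 * ?m\<^sup>2"
      using norm_perturbed_solution_le[OF sW exact] small by (simp add: \<xi>_def)
    then have solution: "?x\<^sup>2 / ?m\<^sup>2 \<le> ?t\<^sup>2 * ?R\<^sup>2 / ?f\<^sup>2"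
      using False \<open>F \<noteq> 0\<close> by (simp add: divide_le_eq le_divide_eq algebra_simps)
    have "0 < ?w" using nonzero_if_surj[OF sW] by simp
    then have "?w * (1 + ?\<delta>) = ?w + norm E" by (simp add: field_simps)
    then have "?w' \<le> ?w * (1 + ?\<delta>)" using norm_triangle_ineq[of W E] by simp
    then have "?w'\<^sup>2 \<le> ?w\<^sup>2 * (1 + ?\<delta>)\<^sup>2" by (metis norm_ge_zero power_mono power_mult_distrib)
    with solution have "?x\<^sup>2 / ?m\<^sup>2 * ?w'\<^sup>2 \<le> ?t\<^sup>2 * ?R\<^sup>2 / ?f\<^sup>2 * (?w\<^sup>2 * (1 + ?\<delta>)\<^sup>2)"
      by (intro mult_mono) simp_all
    then show ?thesis by (simp add: algebra_simps)
  qed simp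
  then show ?thesis by (simp add: spectral_risk_def exact)
qed

lemma fit_bound_mono:
  fixes \<xi> \<nu> :: real
  assumes "0 \<le> \<xi>" "1 \<le> \<nu>" "\<nu> * \<xi> < 1"
  shows "\<xi>\<^sup>2 / (1 - \<xi>)\<^sup>2 \<le> \<nu>\<^sup>2 * \<xi>\<^sup>2 / (1 - \<nu> * \<xi>)\<^sup>2"
proof -
  have "\<xi> \<le> \<nu> * \<xi>" using assms mult_right_mono[of 1 \<nu> \<xi>] by simp
  then have "\<xi> / (1 - \<xi>) \<le> (\<nu> * \<xi>) / (1 - \<nu> * \<xi>)"
    using assms by (intro frac_le) simp_all
  then have "(\<xi> / (1 - \<xi>))\<^sup>2 \<le> ((\<nu> * \<xi>) / (1 - \<nu> * \<xi>))\<^sup>2"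
    using assms \<open>\<xi> \<le> \<nu> * \<xi>\<close> by (intro power_mono) simp_all
  then show ?thesis by (simp add: power_divide power_mult_distrib)
qed

lemma risk_bound_mono:
  fixes \<xi> \<nu> \<mu> :: real
  assumes "0 \<le> \<xi>" "1 \<le> \<nu>" "1 \<le> \<mu>" "\<nu> * \<xi> < 1"
  shows "((1 + \<xi>) / (1 - \<xi>))\<^sup>2 \<le> ((1 + \<mu> * \<xi>) / (1 - \<nu> * \<xi>))\<^sup>2"
proof -
  have "\<xi> \<le> \<nu> * \<xi>" "\<xi> \<le> \<mu> * \<xi>"
    using assms mult_right_mono[of 1 \<nu> \<xi>] mult_right_mono[of 1 \<mu> \<xi>] by simp_all
  then have "(1 + \<xi>) / (1 - \<xi>) \<le> (1 + \<mu> * \<xi>) / (1 - \<nu> * \<xi>)"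
    using assms by (intro frac_le) simp_all
  then show ?thesis using assms \<open>\<xi> \<le> \<nu> * \<xi>\<close> by (intro power_mono) simp_all
qed

lemma one_le_sqrt_Max_div_Min:
  fixes c :: "'k::finite \<Rightarrow> nat"
  assumes "\<And>k. 0 < c k"
  shows "1 \<le> sqrt (real (Max (range c)) / real (Min (range c)))"
proof -
  have "Min (range c) \<in> range c" by (simp add: Min_in)
  then have "0 < Min (range c)" using assms by auto
  moreover have "Min (range c) \<le> Max (range c)" using \<open>Min (range c) \<in> range c\<close> by simp
  ultimately show ?thesis by simp
qed

lemma indicator_mat_eq_mult:
  fixes lab :: "'n::finite \<Rightarrow> 'k::finite" and g :: "'r::finite \<Rightarrow> 'n" and W :: "real^'n^'r"
  assumes colsum: "\<And>j. (\<Sum>i\<in>UNIV. W $ i $ j) = 1"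
    and support: "\<And>i j. lab (g i) \<noteq> lab j \<Longrightarrow> W $ i $ j = 0"
  shows "indicator_mat lab = indicator_mat (lab \<circ> g) ** W"
proof -
  have "(\<Sum>i\<in>UNIV. (if lab (g i) = k then 1 else 0) * W $ i $ j) = (if lab j = k then 1 else 0)" for k j
  proof (cases "lab j = k")
    case True
    then have "(\<Sum>i\<in>UNIV. (if lab (g i) = k then 1 else 0) * W $ i $ j) = (\<Sum>i\<in>UNIV. W $ i $ j)"
      using support by (intro sum.cong) auto
    then show ?thesis using True colsum by simp
  next
    case False
    then show ?thesis using support by (auto intro: sum.neutral)
  qed
  then show ?thesis by (simp add: indicator_mat_def vec_eq_iff matrix_matrix_mult_def)
qed

theorem theorem5:
  fixes lab :: "'n::finite \<Rightarrow> 'k::finite"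
    and g :: "'r::finite \<Rightarrow> 'n"
    and W dW :: "real^'n^'r"
  assumes g_inj: "inj g"
    and r_pos: "\<forall>k. card {i. lab (g i) = k} \<ge> 1"
    and W_nonneg: "\<forall>i j. W $ i $ j \<ge> 0"
    and W_colsum: "\<forall>j. (\<Sum>i\<in>UNIV. W $ i $ j) = 1"
    and W_rank: "rank W = CARD('r)"
    and W_support: "\<forall>i j. lab (g i) \<noteq> lab j \<longrightarrow> W $ i $ j = 0"
    and xi_small: "spec_norm (pinv W) * spec_norm dW
                    < 1 / sqrt (real (Max (range (\<lambda>k. card {j. lab j = k})))
                              / real (Min (range (\<lambda>k. card {j. lab j = k}))))"
  shows
    "let F = indicator_mat lab;
         W' = W + dW;
         \<xi> = spec_norm (pinv W) * spec_norm dW;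
         \<delta> = frob dW / frob W;
         n\<rho> = sqrt (real (Max (range (\<lambda>k. card {j. lab j = k})))
                    / real (Min (range (\<lambda>k. card {j. lab j = k}))));
         r\<rho> = sqrt (real (Max (range (\<lambda>k. card {i. lab (g i) = k})))
                    / real (Min (range (\<lambda>k. card {i. lab (g i) = k}))));
         X = F ** pinv W;
         X' = F ** pinv W';
         \<gamma> = (frob X)\<^sup>2 * (frob W)\<^sup>2 / (frob (X ** W))\<^sup>2;
         \<epsilon>' = (frob (F - X' ** W'))\<^sup>2 / (frob (X' ** W'))\<^sup>2 + 1;
         \<gamma>' = (frob X')\<^sup>2 * (frob W')\<^sup>2 / (frob (X' ** W'))\<^sup>2
     in \<epsilon>' \<le> n\<rho>\<^sup>2 * \<xi>\<^sup>2 / (1 - n\<rho> * \<xi>)\<^sup>2 + 1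
        \<and> \<gamma>' \<le> \<gamma> * (1 + \<delta>)\<^sup>2 * ((1 + r\<rho> * \<xi>) / (1 - n\<rho> * \<xi>))\<^sup>2"
proof -
  define n\<rho> where "n\<rho> = sqrt (real (Max (range (\<lambda>k. card {j. lab j = k})))
                    / real (Min (range (\<lambda>k. card {j. lab j = k}))))"
  define r\<rho> where "r\<rho> = sqrt (real (Max (range (\<lambda>k. card {i. lab (g i) = k})))
                    / real (Min (range (\<lambda>k. card {i. lab (g i) = k}))))"
  define \<xi> where "\<xi> = spec_norm (pinv W) * spec_norm dW"
  let ?F = "indicator_mat lab" and ?W' = "W + dW"
  have sW: "surj ((*v) W)" using W_rank full_rank_surjective by blast
  have exact: "?F ** pinv W ** W = ?F"
    using indicator_mat_eq_mult[of W lab g] W_colsum W_support mult_pinv_mult[OF sW]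
    by (metis matrix_mul_assoc)
  have "\<exists>i. lab (g i) = k" for k
    using r_pos by (metis (mono_tags) Collect_empty_eq card.empty not_one_le_zero)
  then have n\<rho>: "1 \<le> n\<rho>" unfolding n\<rho>_def by (intro one_le_sqrt_Max_div_Min) (auto simp: card_gt_0_iff)
  have r\<rho>: "1 \<le> r\<rho>" unfolding r\<rho>_def using r_pos by (intro one_le_sqrt_Max_div_Min) (simp add: Suc_le_eq)
  have \<xi>0: "0 \<le> \<xi>" by (simp add: \<xi>_def spec_norm_nonneg)
  have n\<xi>: "n\<rho> * \<xi> < 1" using xi_small n\<rho> by (simp add: n\<rho>_def[symmetric] \<xi>_def field_simps)
  then have \<xi>1: "\<xi> < 1" using mult_right_mono[OF n\<rho> \<xi>0] by simp
  have "fitting_error ?F (?F ** pinv ?W') ?W' \<le> n\<rho>\<^sup>2 * \<xi>\<^sup>2 / (1 - n\<rho> * \<xi>)\<^sup>2 + 1"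
    using perturbed_fit_error_le[OF sW exact, of dW] fit_bound_mono[OF \<xi>0 n\<rho> n\<xi>] \<xi>1
    unfolding \<xi>_def by linarith
  moreover have "spectral_risk (?F ** pinv ?W') ?W'
      \<le> spectral_risk (?F ** pinv W) W * (1 + norm dW / norm W)\<^sup>2 * ((1 + r\<rho> * \<xi>) / (1 - n\<rho> * \<xi>))\<^sup>2"
    using perturbed_spectral_risk_le[OF sW exact, of dW] \<xi>1
      mult_left_mono[OF risk_bound_mono[OF \<xi>0 n\<rho> r\<rho> n\<xi>], of "spectral_risk (?F ** pinv W) W * (1 + norm dW / norm W)\<^sup>2"]
    unfolding \<xi>_def by (simp add: spectral_risk_def)
  ultimately show ?thesis
    unfolding Let_def frob_eq_norm fitting_error_def spectral_risk_def n\<rho>_def r\<rho>_def \<xi>_def ..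
qed

end
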